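(* Let $X\subset Z$ be a compact $G$-invariant subset, $\eta\colon X\to\mathbb R$, $\eta(x)=\|\mu_{\mathfrak p}(x)\|^2$, and let $x\in X$ be a point where $\eta$ attains its maximum on $X$. Put $\beta=\mu_{\mathfrak p}(x)$. Then $\beta$ is an extreme point of the convex hull of $\mu_{\mathfrak p}(X)$, and $x\in X^\beta_{\max}$.
   Context: $U$ compact Lie group, $U^{\mathbb C}=U\exp(i\mathfrak u)$ its complexification with Cartan decomposition; a $U$-invariant inner product $\langle\cdot,\cdot\rangle$ (norm $\|\cdot\|$) on $\mathfrak u$, transported to $i\mathfrak u$, identifies $\mathfrak u^*$ with $i\mathfrak u$. $Z$ Kähler manifold with holomorphic $U^{\mathbb C}$-action, $U$-invariant Kähler form, $U$-equivariant momentum map $\mu\colon Z\to i\mathfrak u$ with $\operatorname{grad}\mu^\alpha=\alpha_Z$ ($\mu^\alpha=\langle\mu,\alpha\rangle$, Kähler metric, $\alpha_Z$ vector field of $t\mapsto\exp(t\alpha)$). $G\subset U^{\mathbb C}$ closed, $K=G\cap U$, $\mathfrak p=\mathfrak g\cap i\mathfrak u$, with $K\times\mathfrak p\to G$, $(k,\alpha)\mapsto k\exp\alpha$ a diffeomorphism. $\mu_{\mathfrak p}=\pi_{\mathfrak p}\circ\mu$ (orthogonal projection), $\mu^\beta_{\mathfrak p}=\langle\mu_{\mathfrak p},\beta\rangle$, and $X^\beta_{\max}=\{y\in X:\mu^\beta_{\mathfrak p}(y)=\max_X\mu^\beta_{\mathfrak p}\}$. *)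

theory Defs
  imports "HOL-Analysis.Analysis"
begin

definition orth_proj :: "'a::euclidean_space set \<Rightarrow> 'a \<Rightarrow> 'a" where
  "orth_proj P v = (THE w. w \<in> P \<and> (\<forall>u\<in>P. inner (v - w) u = 0))"

definition mu_p :: "'a::euclidean_space set \<Rightarrow> ('z \<Rightarrow> 'a) \<Rightarrow> 'z \<Rightarrow> 'a" where
  "mu_p P mu z = orth_proj P (mu z)"

definition mu_p_beta :: "'a::euclidean_space set \<Rightarrow> ('z \<Rightarrow> 'a) \<Rightarrow> 'a \<Rightarrow> 'z \<Rightarrow> real" where
  "mu_p_beta P mu \<beta> z = inner (mu_p P mu z) \<beta>"

definition X_max :: "'a::euclidean_space set \<Rightarrow> ('z \<Rightarrow> 'a) \<Rightarrow> 'z set \<Rightarrow> 'a \<Rightarrow> 'z set" where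
  "X_max P mu X \<beta> = {y \<in> X. mu_p_beta P mu \<beta> y = (SUP z\<in>X. mu_p_beta P mu \<beta> z)}"

end

theory Submission
  imports Defs
begin

text \<open>Let \<open>\<beta> = \<mu>\<^sub>p(x)\<close>. Maximality of \<open>\<parallel>\<beta>\<parallel>\<close> puts \<open>\<mu>\<^sub>p(X)\<close>, hence its convex hull, into the ball
  of radius \<open>\<parallel>\<beta>\<parallel>\<close>. By Cauchy-Schwarz, \<open>\<langle>-, \<beta>\<rangle> \<le> \<parallel>\<beta>\<parallel>\<^sup>2\<close> on that ball with equality only at \<open>\<beta>\<close>.
  So the hyperplane \<open>\<langle>-, \<beta>\<rangle> = \<parallel>\<beta>\<parallel>\<^sup>2\<close> supports the convex hull exactly in \<open>\<beta>\<close>, making \<open>\<beta>\<close> extreme,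
  and \<open>\<mu>\<^sub>p\<^sup>\<beta>\<close> attains its maximum \<open>\<parallel>\<beta>\<parallel>\<^sup>2\<close> on \<open>X\<close> at \<open>x\<close>.\<close>

lemma inner_le_inner_self_if_norm_le:
  fixes b c :: "'a::real_inner"
  assumes "norm c \<le> norm b"
  shows "inner b c \<le> inner b b"
proof -
  have "inner b c \<le> norm b * norm c" by (rule norm_cauchy_schwarz)
  also have "\<dots> \<le> norm b * norm b" using assms by (simp add: mult_left_mono)
  finally show ?thesis by (simp add: norm_eq_sqrt_inner)
qed

lemma eq_if_norm_le_and_inner_eq_inner_self:
  fixes b c :: "'a::real_inner"
  assumes "norm c \<le> norm b" and "inner b c = inner b b"
  shows "c = b"
proof -
  have "inner c c \<le> inner b b" using assms(1) by (simp add: norm_le)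
  then have "inner (c - b) (c - b) \<le> 0"
    using assms(2) by (simp add: inner_diff_left inner_diff_right inner_commute)
  then have "inner (c - b) (c - b) = 0"
    using inner_ge_zero[of "c - b"] by linarith
  then show ?thesis by simp
qed

lemma extreme_point_of_convex_hull_if_norm_maximal:
  fixes S :: "'a::real_inner set"
  assumes "b \<in> S" and "\<And>c. c \<in> S \<Longrightarrow> norm c \<le> norm b"
  shows "b extreme_point_of (convex hull S)"
proof (rule extreme_point_of_Int_supporting_hyperplane_le)
  have ball: "convex hull S \<subseteq> cball 0 (norm b)"
    using assms(2) by (intro hull_minimal) auto
  then show "inner b c \<le> inner b b" if "c \<in> convex hull S" for c
    using that ball by (auto intro!: inner_le_inner_self_if_norm_le)
  have "c = b" if "c \<in> convex hull S" and "inner b c = inner b b" for c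
    using that ball by (auto intro!: eq_if_norm_le_and_inner_eq_inner_self[of c b])
  then show "convex hull S \<inter> {c. inner b c = inner b b} = {b}"
    using hull_inc[of b S convex, OF assms(1)] by blast
qed

lemma mem_X_max_if_norm_maximal:
  assumes "x \<in> X" and "\<And>y. y \<in> X \<Longrightarrow> norm (mu_p P mu y) \<le> norm (mu_p P mu x)"
  shows "x \<in> X_max P mu X (mu_p P mu x)"
proof -
  have "inner (mu_p P mu y) (mu_p P mu x) \<le> inner (mu_p P mu x) (mu_p P mu x)" if "y \<in> X" for y
    using assms(2)[OF that] inner_le_inner_self_if_norm_le by (metis inner_commute)
  then have "(SUP y\<in>X. mu_p_beta P mu (mu_p P mu x) y) = mu_p_beta P mu (mu_p P mu x) x"
    using assms(1) unfolding mu_p_beta_def by (intro cSup_eq_maximum) auto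
  with assms(1) show ?thesis unfolding X_max_def by simp
qed

theorem mainTheorem6:
  fixes mu :: "'z::topological_space \<Rightarrow> 'u::euclidean_space"
    and P :: "'u set"
    and Gs :: "'g set" and act :: "'g \<Rightarrow> 'z \<Rightarrow> 'z"
    and X :: "'z set" and x :: 'z
  assumes mu_cont: "continuous_on UNIV mu"
    and P_sub: "subspace P"
    and X_compact: "compact X"
    and X_inv: "\<forall>g\<in>Gs. \<forall>y\<in>X. act g y \<in> X"
    and x_in: "x \<in> X"
    and x_max: "\<forall>y\<in>X. (norm (mu_p P mu y))\<^sup>2 \<le> (norm (mu_p P mu x))\<^sup>2"
  shows "mu_p P mu x extreme_point_of (convex hull (mu_p P mu ` X))
     \<and> x \<in> X_max P mu X (mu_p P mu x)"
proof
  have norm_max: "norm (mu_p P mu y) \<le> norm (mu_p P mu x)" if "y \<in> X" for y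
    using x_max that by (simp add: power_mono_iff)
  then show "mu_p P mu x extreme_point_of (convex hull (mu_p P mu ` X))"
    using x_in by (intro extreme_point_of_convex_hull_if_norm_maximal) auto
  show "x \<in> X_max P mu X (mu_p P mu x)"
    using x_in norm_max by (rule mem_X_max_if_norm_maximal)
qed

end
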